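(* Let $\Omega\subset\mathbb{R}^2$ be a region of finite area $|\Omega|$ and let $T\subset\Omega$ be a convex polygon with area $|T|$ and perimeter length $L(T)$. Fix $r_{max}>0$ and assume that every point within distance $r_{max}$ of $T$ lies in $\Omega$. A directional distance sensor is placed at a location $(x,y)$ uniformly distributed in $\Omega$ with direction $\theta$ uniformly distributed in $[0,2\pi)$, independently. Its measured distance is $s=\min\{t\in[0,r_{max}] : (x+t\cos\theta,\,y+t\sin\theta)\in T\}$ if this set is nonempty, and $s=\emptyset$ (no detection) otherwise. Then for every $0\le r\le r_{max}$, $$\Pr(s\le r)=\frac{r\,L(T)+\pi |T|}{\pi |\Omega|},$$ where the event $s\le r$ excludes the no-detection outcome.
   Context: In particular $s=0$ when the sensor lies in $T$. Probabilities are geometric probabilities: the probability of a set $X$ of sensor positions $(x,y,\theta)$ equals $\iiint_X dx\,dy\,d\theta/(2\pi|\Omega|)$. *)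

theory Defs
  imports "HOL-Analysis.Analysis"
begin

definition area :: "(real \<times> real) set \<Rightarrow> real" where
  "area A = measure lebesgue A"

definition convex_polygon :: "(real \<times> real) set \<Rightarrow> bool" where
  "convex_polygon T \<longleftrightarrow> polytope T \<and> aff_dim T = 2"

definition perimeter :: "(real \<times> real) set \<Rightarrow> real" where
  "perimeter T = (\<Sum>E\<in>{E. E face_of T \<and> aff_dim E = 1}. diameter E)"

text \<open>Measured distance of the sensor at (x,y) with direction theta; None = no detection.\<close>
definition sensor_dist ::
  "(real \<times> real) set \<Rightarrow> real \<Rightarrow> real \<times> real \<Rightarrow> real \<Rightarrow> real option" where
  "sensor_dist T rmax p \<theta> =
     (let D = {t\<in>{0..rmax}. (fst p + t * cos \<theta>, snd p + t * sin \<theta>) \<in> T}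
      in if D = {} then None else Some (Inf D))"

definition geom_prob :: "(real \<times> real) set \<Rightarrow> ((real \<times> real) \<times> real) set \<Rightarrow> real" where
  "geom_prob \<Omega> X = measure lebesgue (X \<inter> (\<Omega> \<times> {0..<2*pi})) / (2 * pi * area \<Omega>)"

end

theory Submission
  imports Defs
begin

text \<open>For a fixed direction \<open>u\<close>, the positions from which the sensor detects \<open>T\<close> within
  distance \<open>r\<close> form the set swept out by \<open>T\<close> under the translations by \<open>-t u\<close>, \<open>0 \<le> t \<le> r\<close>.
  This set is \<open>T\<close> together with one parallelogram on each edge whose outer unit normal \<open>n\<close>
  satisfies \<open>n \<bullet> u < 0\<close>, all overlaps being null sets; the parallelogram on an edge of length
  \<open>l\<close> has area \<open>r l max 0 (- n \<bullet> u)\<close>. Since the integral of \<open>max 0 (- n \<bullet> (cos \<theta>, sin \<theta>))\<close>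
  over a period is 2, Fubini gives the measure \<open>2 pi |T| + 2 r L(T)\<close> for the set of detecting
  configurations, all of which lie in \<open>\<Omega> \<times> [0, 2 pi)\<close> because of the hypothesis on \<open>rmax\<close>.\<close>

section \<open>Lebesgue measure of linear images in the plane\<close>

definition vec_of_pair :: "real \<times> real \<Rightarrow> real^2" where
  "vec_of_pair p = (\<chi> i. if i = 1 then fst p else snd p)"

lemma vec_of_pair_nth [simp]: "vec_of_pair p $ 1 = fst p" "vec_of_pair p $ 2 = snd p"
  by (auto simp: vec_of_pair_def)

lemma linear_vec_of_pair: "linear vec_of_pair"
  by (auto simp: linear_iff vec_eq_iff vec_of_pair_def)

lemma inj_vec_of_pair: "inj vec_of_pair"
  by (rule inj_on_inverseI[of _ "\<lambda>z. (z$1, z$2)"]) simp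

lemma continuous_on_vec_of_pair: "continuous_on S vec_of_pair"
  by (simp add: linear_continuous_on linear_linear linear_vec_of_pair)

lemma vimage_vec_of_pair_box: "vec_of_pair -` box l u = box (l$1, l$2) (u$1, u$2)"
proof -
  have box_Pair: "box (a, c) (b, d) = box a b \<times> box (c::real) (d::real)" for a b c d
    by (auto simp: box_def Basis_prod_def ball_Un)
  show ?thesis
    by (auto simp: box_Pair mem_box_cart forall_2)
qed

lemma distr_lborel_vec_of_pair: "distr lborel borel vec_of_pair = lborel"
proof (rule lborel_eqI[symmetric])
  fix l u :: "real^2"
  assume lu: "\<And>b. b \<in> Basis \<Longrightarrow> l \<bullet> b \<le> u \<bullet> b"
  have Basis2: "(Basis :: (real^2) set) = {axis 1 1, axis 2 1}"
    by (auto simp: Basis_vec_def UNIV_2)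
  have le: "l$1 \<le> u$1" "l$2 \<le> u$2"
    using lu[of "axis 1 1"] lu[of "axis 2 1"] by (auto simp: cart_eq_inner_axis Basis2)
  have "emeasure (distr lborel borel vec_of_pair) (box l u)
      = emeasure lborel (box (l$1, l$2) (u$1, u$2))"
    by (subst emeasure_distr)
       (auto simp: vimage_vec_of_pair_box intro: borel_measurable_continuous_onI continuous_on_vec_of_pair)
  also have "\<dots> = ennreal ((u$1 - l$1) * (u$2 - l$2))"
    using le by (simp add: emeasure_lborel_box_eq Basis_prod_def)
  also have "\<dots> = (\<Prod>b\<in>Basis. (u - l) \<bullet> b)"
    by (simp add: Basis2 axis_eq_axis cart_eq_inner_axis[symmetric])
  finally show "emeasure (distr lborel borel vec_of_pair) (box l u) = (\<Prod>b\<in>Basis. (u - l) \<bullet> b)" .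
qed simp

lemma measure_vec_of_pair_image:
  assumes "compact S"
  shows "measure lebesgue (vec_of_pair ` S) = measure lebesgue S"
proof -
  have cS: "compact (vec_of_pair ` S)"
    by (intro compact_continuous_image continuous_on_vec_of_pair assms)
  have "emeasure lborel (vec_of_pair ` S) = emeasure lborel (vec_of_pair -` vec_of_pair ` S)"
    by (subst distr_lborel_vec_of_pair[symmetric], subst emeasure_distr)
       (auto simp: cS borel_compact intro: borel_measurable_continuous_onI continuous_on_vec_of_pair)
  then have "measure lborel (vec_of_pair ` S) = measure lborel S"
    by (simp add: measure_def inj_vimage_image_eq[OF inj_vec_of_pair])
  then show ?thesis
    by (simp add: cS assms borel_compact)
qed

lemma measure_linear_image_pair:
  fixes \<alpha> \<beta> \<gamma> \<delta> :: real and S :: "(real \<times> real) set"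
  assumes "compact S"
  shows "measure lebesgue ((\<lambda>(x, y). (\<alpha> * x + \<beta> * y, \<gamma> * x + \<delta> * y)) ` S)
         = \<bar>\<alpha> * \<delta> - \<beta> * \<gamma>\<bar> * measure lebesgue S"
proof -
  define L where "L = (\<lambda>(x, y). (\<alpha> * x + \<beta> * y, \<gamma> * x + \<delta> * y))"
  define M where "M = (\<lambda>z::real^2. vector [\<alpha> * z$1 + \<beta> * z$2, \<gamma> * z$1 + \<delta> * z$2] :: real^2)"
  have "linear M"
    by (auto simp: linear_iff vec_eq_iff M_def forall_2 algebra_simps)
  have "compact (L ` S)"
    unfolding L_def by (intro compact_continuous_image assms) (auto intro!: continuous_intros simp: case_prod_unfold)
  have "vec_of_pair (L p) = M (vec_of_pair p)" for p
    by (auto simp: vec_eq_iff L_def M_def forall_2 split: prod.splits)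
  then have comm: "vec_of_pair ` L ` S = M ` vec_of_pair ` S"
    by (simp add: image_image)
  have "det (matrix M) = \<alpha> * \<delta> - \<beta> * \<gamma>"
    by (simp add: det_2 matrix_def M_def axis_def)
  moreover have "measure lebesgue (L ` S) = measure lebesgue (M ` vec_of_pair ` S)"
    using \<open>compact (L ` S)\<close> by (simp add: measure_vec_of_pair_image flip: comm)
  moreover have "\<dots> = \<bar>det (matrix M)\<bar> * measure lebesgue (vec_of_pair ` S)"
    by (intro measure_linear_image \<open>linear M\<close> lmeasurable_compact compact_continuous_image
        continuous_on_vec_of_pair assms)
  ultimately show ?thesis
    by (simp add: L_def measure_vec_of_pair_image assms)
qed

section \<open>Sweeping a set along a direction\<close>

definition sweep :: "'a::real_vector set \<Rightarrow> 'a \<Rightarrow> real \<Rightarrow> 'a set" where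
  "sweep T u r = (\<lambda>(q, t). q - t *\<^sub>R u) ` (T \<times> {0..r})"

lemma mem_sweep: "p \<in> sweep T u r \<longleftrightarrow> (\<exists>t\<in>{0..r}. p + t *\<^sub>R u \<in> T)"
  by (force simp: sweep_def image_iff)

lemma sweep_mono: "S \<subseteq> T \<Longrightarrow> sweep S u r \<subseteq> sweep T u r"
  by (auto simp: sweep_def)

lemma compact_sweep:
  fixes T :: "'a::real_normed_vector set"
  shows "compact T \<Longrightarrow> compact (sweep T u r)"
  unfolding sweep_def
  by (intro compact_continuous_image compact_Times compact_Icc)
     (auto intro!: continuous_intros simp: case_prod_unfold)

lemma Inf_hitting_times_mem:
  fixes T :: "'a::real_normed_vector set"
  assumes "closed T" and "{t\<in>{0..r}. p + t *\<^sub>R u \<in> T} \<noteq> {}"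
  shows "Inf {t\<in>{0..r}. p + t *\<^sub>R u \<in> T} \<in> {t\<in>{0..r}. p + t *\<^sub>R u \<in> T}"
proof (rule closed_contains_Inf[OF assms(2)])
  have "closed ((\<lambda>t. p + t *\<^sub>R u) -` T)"
    by (intro continuous_closed_vimage assms(1) continuous_intros)
  moreover have "{t\<in>{0..r}. p + t *\<^sub>R u \<in> T} = {0..r} \<inter> (\<lambda>t. p + t *\<^sub>R u) -` T"
    by auto
  ultimately show "closed {t\<in>{0..r}. p + t *\<^sub>R u \<in> T}"
    by (simp add: closed_Int)
qed (auto simp: bdd_below_def)

lemma negligible_line:
  fixes c d :: "'a::euclidean_space"
  assumes "DIM('a) \<ge> 2"
  shows "negligible ((+) c ` span {d})"
proof -
  have "dim (span {d}) \<le> 1"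
    using dim_le_card[of "{d}" "span {d}"] by simp
  then show ?thesis
    using assms by (intro negligible_translation negligible_lowdim) auto
qed

lemma closed_segment_subset_line: "closed_segment v w \<subseteq> (+) v ` span {w - v}"
proof
  fix x assume "x \<in> closed_segment v w"
  then obtain s where "x = v + s *\<^sub>R (w - v)"
    by (auto simp: closed_segment_def algebra_simps)
  then show "x \<in> (+) v ` span {w - v}"
    by (auto intro: span_mul span_base)
qed

lemma negligible_closed_segment:
  fixes v w :: "'a::euclidean_space"
  assumes "DIM('a) \<ge> 2"
  shows "negligible (closed_segment v w)"
  using negligible_subset[OF negligible_line[OF assms] closed_segment_subset_line] .

lemma diameter_closed_segment:
  fixes v w :: "'a::euclidean_space"
  shows "diameter (closed_segment v w) = dist v w"
proof (rule antisym)
  show "diameter (closed_segment v w) \<le> dist v w"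
  proof (rule diameter_le)
    fix x y assume x: "x \<in> closed_segment v w" and y: "y \<in> closed_segment v w"
    have "dist x y \<le> dist y v \<or> dist x y \<le> dist y w"
      using dist_decreases_closed_segment[OF x, of y] by (simp add: dist_commute)
    then show "norm (x - y) \<le> dist v w"
      using dist_in_closed_segment[OF y] by (auto simp: dist_norm)
  qed simp
  show "dist v w \<le> diameter (closed_segment v w)"
    by (rule diameter_bounded_bound) (auto simp: compact_imp_bounded)
qed

definition cross2 :: "real \<times> real \<Rightarrow> real \<times> real \<Rightarrow> real" where
  "cross2 x y = fst x * snd y - snd x * fst y"

lemma measure_sweep_closed_segment:
  fixes v w u :: "real \<times> real"
  assumes "r \<ge> 0"
  shows "measure lebesgue (sweep (closed_segment v w) u r) = r * \<bar>cross2 (w - v) u\<bar>"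
proof -
  define L where "L = (\<lambda>(s, t). (fst (w - v) * s + (- fst u) * t, snd (w - v) * s + (- snd u) * t))"
  have seg: "closed_segment v w = (\<lambda>s. v + s *\<^sub>R (w - v)) ` {0..1}"
    unfolding closed_segment_def by (auto simp: image_iff algebra_simps)
  have "sweep (closed_segment v w) u r = (+) v ` L ` cbox (0, 0) (1, r)"
    by (force simp: sweep_def seg L_def cbox_Pair_eq image_iff prod_eq_iff algebra_simps)
  then have "measure lebesgue (sweep (closed_segment v w) u r) = measure lebesgue (L ` cbox (0, 0) (1, r))"
    by (simp only: measure_translation)
  also have "\<dots> = \<bar>fst (w - v) * - snd u - - fst u * snd (w - v)\<bar> * r"
    unfolding L_def using assms
    by (subst measure_linear_image_pair) (simp_all add: measure_lborel_cbox_eq Basis_prod_def)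
  also have "\<bar>fst (w - v) * - snd u - - fst u * snd (w - v)\<bar> = \<bar>cross2 (w - v) u\<bar>"
    by (simp add: cross2_def abs_if algebra_simps)
  finally show ?thesis
    by simp
qed

lemma unit_orthogonal_eq_or_eq_neg:
  fixes a c d :: "real \<times> real"
  assumes "norm a = 1" "norm c = 1" "d \<noteq> 0" "a \<bullet> d = 0" "c \<bullet> d = 0"
  shows "c = a \<or> c = - a"
proof -
  obtain a1 a2 c1 c2 d1 d2 where abc: "a = (a1, a2)" "c = (c1, c2)" "d = (d1, d2)"
    by (metis surj_pair)
  have na: "a1\<^sup>2 + a2\<^sup>2 = 1" and nc: "c1\<^sup>2 + c2\<^sup>2 = 1"
    using assms(1,2) abc by (simp_all add: norm_Pair)
  have ad: "a1 * d1 + a2 * d2 = 0" and cd: "c1 * d1 + c2 * d2 = 0"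
    using assms(4,5) abc by simp_all
  have "(a1 * c2 - a2 * c1) * d1 = 0" "(a1 * c2 - a2 * c1) * d2 = 0"
    using ad cd by algebra+
  then have det: "a1 * c2 - a2 * c1 = 0"
    using assms(3) abc by (auto simp: zero_prod_def)
  define k where "k = a1 * c1 + a2 * c2"
  have c1: "c1 = k * a1" and c2: "c2 = k * a2"
    using det na unfolding k_def by algebra+
  then have "k\<^sup>2 * (a1\<^sup>2 + a2\<^sup>2) = 1"
    using nc by (simp add: power2_eq_square algebra_simps)
  then have "k = 1 \<or> k = -1"
    using na by (simp add: power2_eq_1_iff)
  then show ?thesis
    using abc c1 c2 by auto
qed

lemma abs_cross2_orthogonal_unit:
  fixes a d u :: "real \<times> real"
  assumes "norm a = 1" "a \<bullet> d = 0"
  shows "\<bar>cross2 d u\<bar> = norm d * \<bar>a \<bullet> u\<bar>"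
proof -
  obtain a1 a2 d1 d2 where ad: "a = (a1, a2)" "d = (d1, d2)"
    by (metis surj_pair)
  have na: "a1\<^sup>2 + a2\<^sup>2 = 1" and perp: "a1 * d1 + a2 * d2 = 0"
    using assms ad by (simp_all add: norm_Pair)
  define l where "l = a1 * d2 - a2 * d1"
  have d1: "d1 = - l * a2" and d2: "d2 = l * a1"
    using perp na unfolding l_def by algebra+
  have "d1\<^sup>2 + d2\<^sup>2 = l\<^sup>2 * (a1\<^sup>2 + a2\<^sup>2)"
    using d1 d2 by (simp add: power2_eq_square algebra_simps)
  then have "d1\<^sup>2 + d2\<^sup>2 = l\<^sup>2"
    using na by simp
  then have "norm d = \<bar>l\<bar>"
    using ad by (simp add: norm_Pair)
  moreover have "cross2 d u = - l * (a \<bullet> u)"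
    using ad d1 d2 by (cases u) (simp add: cross2_def algebra_simps)
  ultimately show ?thesis
    by (simp add: abs_mult)
qed

section \<open>Averaging over directions\<close>

lemma cos_nonpos_pi_half_three_pi_half: "pi/2 \<le> x \<Longrightarrow> x \<le> 3*pi/2 \<Longrightarrow> cos x \<le> 0"
  using cos_ge_zero[of "x - pi"] by (simp add: cos_diff)

lemma has_integral_pos_part_cos_nonneg:
  fixes c d \<psi> :: real
  assumes "c \<le> d" and "\<And>\<theta>. \<theta> \<in> {c..d} \<Longrightarrow> 0 \<le> cos (\<theta> - \<psi>)"
  shows "((\<lambda>\<theta>. max 0 (cos (\<theta> - \<psi>))) has_integral (sin (d - \<psi>) - sin (c - \<psi>))) {c..d}"
proof -
  have "((\<lambda>\<theta>. sin (\<theta> - \<psi>)) has_real_derivative cos (\<theta> - \<psi>)) (at \<theta> within {c..d})" for \<theta>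
    by (auto intro!: derivative_eq_intros)
  then have "((\<lambda>\<theta>. cos (\<theta> - \<psi>)) has_integral (sin (d - \<psi>) - sin (c - \<psi>))) {c..d}"
    using fundamental_theorem_of_calculus[OF assms(1), of "\<lambda>\<theta>. sin (\<theta> - \<psi>)"]
    by (simp add: has_real_derivative_iff_has_vector_derivative)
  then show ?thesis
    by (rule has_integral_eq[rotated]) (use assms(2) in auto)
qed

lemma has_integral_pos_part_cos_nonpos:
  fixes c d \<psi> :: real
  assumes "\<And>\<theta>. \<theta> \<in> {c..d} \<Longrightarrow> cos (\<theta> - \<psi>) \<le> 0"
  shows "((\<lambda>\<theta>. max 0 (cos (\<theta> - \<psi>))) has_integral 0) {c..d}"
  by (intro has_integral_is_0) (simp add: assms max.absorb1)

lemma has_integral_pos_part_cos_period: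
  fixes \<psi> :: real
  assumes "- (pi/2) \<le> \<psi>" "\<psi> < 3*pi/2"
  shows "((\<lambda>\<theta>. max 0 (cos (\<theta> - \<psi>))) has_integral 2) {0..2*pi}"
proof -
  let ?f = "\<lambda>\<theta>. max 0 (cos (\<theta> - \<psi>))"
  have cos_shift: "cos (\<theta> - \<psi>) = cos (\<theta> - \<psi> - 2*pi)" "cos (\<theta> - \<psi>) = cos (\<psi> - \<theta>)" for \<theta>
    by (simp_all add: cos_diff)
  consider "\<psi> < pi/2" | "pi/2 \<le> \<psi>"
    by linarith
  then show ?thesis
  proof cases
    case 1
    have "(?f has_integral (sin ((\<psi> + pi/2) - \<psi>) - sin (0 - \<psi>))) {0..\<psi> + pi/2}"
      by (rule has_integral_pos_part_cos_nonneg) (use assms 1 in \<open>auto intro!: cos_ge_zero\<close>)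
    moreover have "(?f has_integral 0) {\<psi> + pi/2..\<psi> + 3*pi/2}"
      by (rule has_integral_pos_part_cos_nonpos) (auto intro: cos_nonpos_pi_half_three_pi_half)
    moreover have "(?f has_integral (sin (2*pi - \<psi>) - sin ((\<psi> + 3*pi/2) - \<psi>))) {\<psi> + 3*pi/2..2*pi}"
      by (rule has_integral_pos_part_cos_nonneg) (use assms 1 in \<open>auto simp: cos_shift(1) intro!: cos_ge_zero\<close>)
    ultimately have "(?f has_integral (sin ((\<psi> + pi/2) - \<psi>) - sin (0 - \<psi>) + 0
        + (sin (2*pi - \<psi>) - sin ((\<psi> + 3*pi/2) - \<psi>)))) {0..2*pi}"
      using assms 1 by (intro has_integral_combine) auto
    moreover have "sin (3*pi/2) = -1"
      using sin_periodic_pi[of "pi/2"] by (simp add: field_simps)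
    ultimately show ?thesis
      by (simp add: sin_2pi_minus)
  next
    case 2
    have "(?f has_integral 0) {0..\<psi> - pi/2}"
      using assms 2
      by (intro has_integral_pos_part_cos_nonpos) (auto simp: cos_shift(2) intro!: cos_nonpos_pi_half_three_pi_half)
    moreover have "(?f has_integral (sin ((\<psi> + pi/2) - \<psi>) - sin ((\<psi> - pi/2) - \<psi>))) {\<psi> - pi/2..\<psi> + pi/2}"
      by (rule has_integral_pos_part_cos_nonneg) (auto intro!: cos_ge_zero)
    moreover have "(?f has_integral 0) {\<psi> + pi/2..2*pi}"
      using assms 2
      by (intro has_integral_pos_part_cos_nonpos) (auto intro!: cos_nonpos_pi_half_three_pi_half)
    ultimately have "(?f has_integral (0 + (sin ((\<psi> + pi/2) - \<psi>) - sin ((\<psi> - pi/2) - \<psi>)) + 0)) {0..2*pi}"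
      using assms 2 by (intro has_integral_combine) auto
    then show ?thesis
      by simp
  qed
qed

lemma has_integral_pos_part_inner_direction:
  fixes c :: "real \<times> real"
  assumes "norm c = 1"
  shows "((\<lambda>\<theta>. max 0 (- (c \<bullet> (cos \<theta>, sin \<theta>)))) has_integral 2) {0..2*pi}"
proof -
  have "(- fst c)\<^sup>2 + (- snd c)\<^sup>2 = 1"
    using assms by (cases c) (simp add: norm_Pair)
  then obtain \<psi> where \<psi>: "0 \<le> \<psi>" "\<psi> < 2*pi" "- fst c = cos \<psi>" "- snd c = sin \<psi>"
    by (rule sincos_total_2pi)
  \<comment> \<open>Shifting \<open>\<psi>\<close> into \<open>[-pi/2, 3*pi/2)\<close> leaves only two sign patterns of \<open>cos (\<theta> - \<psi>)\<close> on \<open>[0, 2*pi]\<close>.\<close>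
  define \<psi>' where "\<psi>' = (if \<psi> < 3*pi/2 then \<psi> else \<psi> - 2*pi)"
  have "- (c \<bullet> (cos \<theta>, sin \<theta>)) = cos (\<theta> - \<psi>)" for \<theta>
  proof -
    have "- (c \<bullet> (cos \<theta>, sin \<theta>)) = (- fst c) * cos \<theta> + (- snd c) * sin \<theta>"
      by (cases c) simp
    then show ?thesis
      unfolding \<psi>(3,4) by (simp add: cos_diff mult.commute)
  qed
  moreover have "cos (\<theta> - \<psi>') = cos (\<theta> - \<psi>)" for \<theta>
    using cos_periodic[of "\<theta> - \<psi>"] by (simp add: \<psi>'_def algebra_simps)
  moreover have "- (pi/2) \<le> \<psi>'" "\<psi>' < 3*pi/2"
    using \<psi> by (auto simp: \<psi>'_def)
  ultimately show ?thesis
    using has_integral_pos_part_cos_period[of \<psi>'] by simp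
qed

lemma measure_eq_integral_slices:
  fixes Z :: "('a::euclidean_space \<times> real) set"
  assumes Z: "Z \<in> sets borel" and f: "f \<in> borel_measurable borel"
    and slice: "\<And>\<theta>. measure lebesgue ((\<lambda>p. (p, \<theta>)) -` Z) = f \<theta>"
    and slice_fin: "\<And>\<theta>. (\<lambda>p. (p, \<theta>)) -` Z \<in> lmeasurable"
    and I: "(f has_integral I) UNIV"
  shows "measure lebesgue Z = I"
proof -
  have slice_borel: "(\<lambda>p. (p, \<theta>)) -` Z \<in> sets borel" for \<theta>
  proof -
    have "(\<lambda>p::'a. (p, \<theta>)) \<in> borel_measurable borel"
      by (intro borel_measurable_continuous_onI continuous_intros)
    from measurable_sets[OF this Z] show ?thesis
      by simp
  qed
  have f_nonneg: "0 \<le> f \<theta>" for \<theta>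
    using slice[of \<theta>] by (metis measure_nonneg)
  have slice_emeasure: "emeasure lborel ((\<lambda>p. (p, \<theta>)) -` Z) = ennreal (f \<theta>)" for \<theta>
  proof -
    have "emeasure lebesgue ((\<lambda>p. (p, \<theta>)) -` Z) = ennreal (f \<theta>)"
      using slice_fin[of \<theta>] by (simp add: emeasure_eq_measure2 slice)
    then show ?thesis
      using slice_borel[of \<theta>] by simp
  qed
  have "emeasure lborel Z = emeasure (lborel \<Otimes>\<^sub>M lborel) Z"
    by (simp only: lborel_prod)
  also have "\<dots> = (\<integral>\<^sup>+\<theta>. emeasure lborel ((\<lambda>p. (p, \<theta>)) -` Z) \<partial>lborel)"
    using Z by (intro lborel_pair.emeasure_pair_measure_alt2) (simp only: lborel_prod sets_lborel)
  also have "\<dots> = ennreal I"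
    using nn_integral_has_integral_lborel[OF f f_nonneg I] by (simp add: slice_emeasure)
  finally have "emeasure lebesgue Z = ennreal I"
    using Z by simp
  moreover have "0 \<le> I"
    using I f_nonneg by (rule has_integral_nonneg)
  ultimately show ?thesis
    by (simp add: measure_def)
qed

definition direction :: "real \<Rightarrow> real \<times> real" where
  "direction \<theta> = (cos \<theta>, sin \<theta>)"

lemma norm_direction [simp]: "norm (direction \<theta>) = 1"
  by (simp add: direction_def norm_Pair)

lemma sets_borel_sweep_directions:
  fixes T :: "(real \<times> real) set"
  assumes "compact T"
  shows "{(p, \<theta>). p \<in> sweep T (direction \<theta>) r \<and> \<theta> \<in> {0..<2*pi}} \<in> sets borel"
proof -
  define K where "K = (\<lambda>((q, \<theta>), t). (q - t *\<^sub>R direction \<theta>, \<theta>)) ` ((T \<times> {0..2*pi}) \<times> {0..r})"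
  have "compact K"
    unfolding K_def direction_def using assms
    by (intro compact_continuous_image compact_Times compact_Icc)
       (auto intro!: continuous_intros simp: case_prod_unfold)
  moreover have "{(p, \<theta>). p \<in> sweep T (direction \<theta>) r \<and> \<theta> \<in> {0..<2*pi}} = K \<inter> snd -` {0..<2*pi}"
    by (force simp: K_def mem_sweep image_iff)
  moreover have "snd \<in> borel_measurable (borel :: ((real \<times> real) \<times> real) measure)"
    by (intro borel_measurable_continuous_onI continuous_intros)
  from measurable_sets[OF this atLeastLessThan_borel]
  have "snd -` {0..<2*pi} \<in> sets (borel :: ((real \<times> real) \<times> real) measure)"
    by simp
  ultimately show ?thesis
    by (simp add: borel_compact sets.Int)
qed

section \<open>Convex polygons as intersections of unit-normal halfplanes\<close>

locale polygon_halfplanes =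
  fixes T :: "(real \<times> real) set" and F :: "(real \<times> real) set set"
    and a :: "(real \<times> real) set \<Rightarrow> real \<times> real" and b :: "(real \<times> real) set \<Rightarrow> real"
  assumes polygon: "convex_polygon T"
    and finite_F: "finite F"
    and polygon_eq: "T = {x. \<forall>h\<in>F. a h \<bullet> x \<le> b h}"
    and halfplane_eq: "\<And>h. h \<in> F \<Longrightarrow> h = {x. a h \<bullet> x \<le> b h}"
    and norm_normal: "\<And>h. h \<in> F \<Longrightarrow> norm (a h) = 1"
    and facet_of_iff: "\<And>C. C facet_of T \<longleftrightarrow> (\<exists>h\<in>F. C = T \<inter> {x. a h \<bullet> x = b h})"
begin

definition edge :: "(real \<times> real) set \<Rightarrow> (real \<times> real) set" where
  "edge h = T \<inter> {x. a h \<bullet> x = b h}"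

definition facing :: "real \<times> real \<Rightarrow> (real \<times> real) set set" where
  "facing u = {h\<in>F. a h \<bullet> u < 0}"

lemma mem_polygon: "x \<in> T \<longleftrightarrow> (\<forall>h\<in>F. a h \<bullet> x \<le> b h)"
  by (subst polygon_eq) simp

lemma aff_dim_polygon: "aff_dim T = 2"
  using polygon by (simp add: convex_polygon_def)

lemma compact_polygon: "compact T"
  using polygon by (simp add: convex_polygon_def polytope_imp_compact)

lemma edge_subset: "edge h \<subseteq> T"
  by (auto simp: edge_def)

lemma compact_edge: "compact (edge h)"
  by (simp add: edge_def compact_Int_closed compact_polygon closed_hyperplane)

lemma facing_subset: "facing u \<subseteq> F"
  by (auto simp: facing_def)

lemma facet_of_edge: "h \<in> F \<Longrightarrow> edge h facet_of T"
  by (auto simp: facet_of_iff edge_def)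

lemma aff_dim_edge: "h \<in> F \<Longrightarrow> aff_dim (edge h) = 1"
  using facet_of_edge aff_dim_polygon by (simp add: facet_of_def)

lemma edge_eq_closed_segment:
  assumes "h \<in> F"
  obtains v w where "edge h = closed_segment v w"
proof -
  have face: "edge h face_of T" "edge h \<noteq> {}"
    using facet_of_edge[OF assms] by (auto simp: facet_of_def)
  have "polytope (edge h)"
    using polygon face(1) by (auto simp: convex_polygon_def intro: face_of_polytope_polytope)
  moreover have "collinear (edge h)"
    using aff_dim_edge[OF assms] by (simp add: collinear_aff_dim)
  ultimately show thesis
    using compact_convex_collinear_segment[OF face(2)] polytope_imp_compact polytope_imp_convex that
    by metis
qed

lemma negligible_edge: "h \<in> F \<Longrightarrow> negligible (edge h)"
  by (metis edge_eq_closed_segment negligible_closed_segment DIM_prod DIM_real one_add_one order_refl)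

lemma edges_share_two_points:
  assumes h: "h \<in> F" and h': "h' \<in> F" and yz: "y \<noteq> z"
    and y: "y \<in> edge h" "y \<in> edge h'" and z: "z \<in> edge h" "z \<in> edge h'"
  shows "h' = h \<or> a h' = - a h"
proof -
  have "a h \<bullet> (y - z) = 0" "a h' \<bullet> (y - z) = 0"
    using y z by (auto simp: edge_def inner_diff_right)
  then have "a h' = a h \<or> a h' = - a h"
    using unit_orthogonal_eq_or_eq_neg[of "a h" "a h'" "y - z"] norm_normal h h' yz by auto
  moreover have "b h' = b h" if "a h' = a h"
    using y that by (auto simp: edge_def)
  ultimately show ?thesis
    using halfplane_eq[OF h] halfplane_eq[OF h'] by auto
qed

lemma inj_on_edge: "inj_on edge F"
proof (rule inj_onI)
  fix h h' assume h: "h \<in> F" and h': "h' \<in> F" and eq: "edge h = edge h'"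
  have "\<not> (\<forall>y\<in>edge h. \<forall>z\<in>edge h. y = z)"
  proof
    assume "\<forall>y\<in>edge h. \<forall>z\<in>edge h. y = z"
    then have "edge h = {} \<or> (\<exists>y. edge h = {y})"
      by blast
    then show False
      using aff_dim_edge[OF h] by auto
  qed
  then obtain y z where yz: "y \<in> edge h" "z \<in> edge h" "y \<noteq> z"
    by blast
  have "\<not> a h' = - a h"
  proof
    assume opp: "a h' = - a h"
    then have "b h' = - b h"
      using yz eq by (auto simp: edge_def)
    have "T \<subseteq> {x. a h \<bullet> x = b h}"
    proof
      fix x assume "x \<in> T"
      then have "a h \<bullet> x \<le> b h" "a h' \<bullet> x \<le> b h'"
        using h h' by (auto simp: mem_polygon)
      then show "x \<in> {x. a h \<bullet> x = b h}"
        using opp \<open>b h' = - b h\<close> by simp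
    qed
    then have "aff_dim T \<le> aff_dim {x. a h \<bullet> x = b h}"
      by (rule aff_dim_subset)
    moreover have "a h \<noteq> 0"
      using norm_normal[OF h] by auto
    ultimately show False
      using aff_dim_polygon by (simp add: aff_dim_hyperplane)
  qed
  then show "h = h'"
    using edges_share_two_points[OF h h' yz(3)] yz eq by auto
qed

lemma perimeter_eq_sum_edges: "perimeter T = (\<Sum>h\<in>F. diameter (edge h))"
proof -
  have "{E. E face_of T \<and> aff_dim E = 1} = {E. E facet_of T}"
    using aff_dim_polygon by (auto simp: facet_of_def)
  also have "\<dots> = edge ` F"
    by (auto simp: facet_of_iff edge_def)
  finally show ?thesis
    by (simp add: perimeter_def sum.reindex[OF inj_on_edge])
qed

text \<open>Read as \<open>p = q - t u = q' - t' u\<close>: the ray from \<open>p\<close> in direction \<open>u\<close> reaches the facing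
  edge no later than any point of \<open>T\<close>.\<close>

lemma facing_edge_hit_first:
  assumes "h \<in> facing u" "q \<in> T" "q' \<in> edge h" "q - t *\<^sub>R u = q' - t' *\<^sub>R u"
  shows "t' \<le> t"
proof -
  have "q = q' + (t - t') *\<^sub>R u"
    using assms(4) by (simp add: algebra_simps)
  then have "a h \<bullet> q = b h + (t - t') * (a h \<bullet> u)"
    using assms(3) by (simp add: edge_def inner_add_right)
  moreover have "a h \<bullet> q \<le> b h"
    using assms(1,2) by (auto simp: mem_polygon facing_def)
  ultimately show ?thesis
    using assms(1) by (auto simp: facing_def mult_le_0_iff)
qed

lemma eventually_backward_in_polygon:
  assumes "q \<in> T" and active: "\<And>h. h \<in> F \<Longrightarrow> a h \<bullet> q = b h \<Longrightarrow> 0 \<le> a h \<bullet> u"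
  shows "eventually (\<lambda>s. q - s *\<^sub>R u \<in> T) (at_right 0)"
proof -
  have "eventually (\<lambda>s. a h \<bullet> (q - s *\<^sub>R u) \<le> b h) (at_right 0)" if h: "h \<in> F" for h
  proof (cases "a h \<bullet> q = b h")
    case True
    show ?thesis
      by (rule eventually_mono[OF eventually_at_right_less])
         (use True active[OF h] in \<open>simp add: inner_diff_right\<close>)
  next
    case False
    then have "a h \<bullet> q < b h"
      using \<open>q \<in> T\<close> h by (auto simp: mem_polygon order_less_le)
    moreover have "((\<lambda>s. a h \<bullet> (q - s *\<^sub>R u)) \<longlongrightarrow> a h \<bullet> q) (at_right 0)"
      by (intro tendsto_eq_intros) auto
    ultimately have "eventually (\<lambda>s. a h \<bullet> (q - s *\<^sub>R u) < b h) (at_right 0)"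
      by (rule order_tendstoD(2)[rotated])
    then show ?thesis
      by (rule eventually_mono) simp
  qed
  then show ?thesis
    using finite_F by (simp add: mem_polygon eventually_ball_finite)
qed

lemma first_hit_on_facing_edge:
  assumes "p \<notin> T" and "p \<in> sweep T u r"
  shows "\<exists>h\<in>facing u. p \<in> sweep (edge h) u r"
proof -
  define D where "D = {t\<in>{0..r}. p + t *\<^sub>R u \<in> T}"
  define t0 where "t0 = Inf D"
  have "t0 \<in> D"
    unfolding t0_def D_def
    using assms(2) by (intro Inf_hitting_times_mem compact_imp_closed compact_polygon) (auto simp: mem_sweep)
  then have t0: "0 < t0" "t0 \<le> r" "p + t0 *\<^sub>R u \<in> T"
    using assms(1) by (auto simp: D_def order_le_less)
  define q where "q = p + t0 *\<^sub>R u"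
  have "\<exists>h\<in>F. a h \<bullet> q = b h \<and> a h \<bullet> u < 0"
  proof (rule ccontr)
    assume "\<not> ?thesis"
    then have "eventually (\<lambda>s. q - s *\<^sub>R u \<in> T \<and> s \<in> {0<..<t0}) (at_right 0)"
      using t0 q_def by (intro eventually_conj eventually_backward_in_polygon eventually_at_right_real) auto
    then obtain s where s: "q - s *\<^sub>R u \<in> T" "0 < s" "s < t0"
      using eventually_happens'[OF trivial_limit_at_right_real] by auto
    then have "t0 - s \<in> D"
      using t0 by (auto simp: D_def q_def algebra_simps)
    then have "t0 \<le> t0 - s"
      unfolding t0_def by (rule cInf_lower) (auto simp: D_def bdd_below_def)
    then show False
      using s by simp
  qed
  then obtain h where "h \<in> facing u" "q \<in> edge h"
    using t0 by (auto simp: facing_def edge_def q_def)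
  moreover have "p \<in> sweep (edge h) u r"
    using \<open>q \<in> edge h\<close> t0 unfolding mem_sweep q_def by (intro bexI[of _ t0]) auto
  ultimately show ?thesis
    by blast
qed

lemma sweep_polygon_eq:
  assumes "r \<ge> 0"
  shows "sweep T u r = T \<union> (\<Union>h\<in>facing u. sweep (edge h) u r)"
proof -
  have "T \<subseteq> sweep T u r"
    using assms by (force simp: mem_sweep)
  moreover have "sweep (edge h) u r \<subseteq> sweep T u r" for h
    by (intro sweep_mono edge_subset)
  ultimately show ?thesis
    using first_hit_on_facing_edge by blast
qed

lemma negligible_polygon_Int_sweep_edge:
  assumes "h \<in> facing u"
  shows "negligible (T \<inter> sweep (edge h) u r)"
proof (rule negligible_subset[OF negligible_edge])
  show "h \<in> F"
    using assms facing_subset by blast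
  show "T \<inter> sweep (edge h) u r \<subseteq> edge h"
  proof
    fix x assume "x \<in> T \<inter> sweep (edge h) u r"
    then obtain t where x: "x \<in> T" "x + t *\<^sub>R u \<in> edge h" "t \<in> {0..r}"
      by (auto simp: mem_sweep)
    then have "t \<le> 0"
      using facing_edge_hit_first[OF assms x(1,2), of 0 t] by simp
    then show "x \<in> edge h"
      using x by simp
  qed
qed

lemma negligible_sweep_edges_Int:
  assumes h: "h \<in> facing u" and h': "h' \<in> facing u" and "h \<noteq> h'"
  shows "negligible (sweep (edge h) u r \<inter> sweep (edge h') u r)"
proof -
  let ?C = "edge h \<inter> edge h'"
  have "sweep (edge h) u r \<inter> sweep (edge h') u r \<subseteq> (\<Union>c\<in>?C. (+) c ` span {u})"
  proof
    fix x assume "x \<in> sweep (edge h) u r \<inter> sweep (edge h') u r"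
    then obtain t t' where q: "x + t *\<^sub>R u \<in> edge h" and q': "x + t' *\<^sub>R u \<in> edge h'"
      by (auto simp: mem_sweep)
    have "x + t' *\<^sub>R u \<in> T" "x + t *\<^sub>R u \<in> T"
      using q q' edge_subset by blast+
    have "t \<le> t'"
      by (rule facing_edge_hit_first[OF h \<open>x + t' *\<^sub>R u \<in> T\<close> q]) simp
    moreover have "t' \<le> t"
      by (rule facing_edge_hit_first[OF h' \<open>x + t *\<^sub>R u \<in> T\<close> q']) simp
    ultimately have "t = t'"
      by simp
    then have "x + t *\<^sub>R u \<in> ?C"
      using q q' by simp
    moreover have "x = (x + t *\<^sub>R u) + (- t) *\<^sub>R u"
      by simp
    ultimately show "x \<in> (\<Union>c\<in>?C. (+) c ` span {u})"
      by (blast intro: span_mul span_base)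
  qed
  moreover have "finite ?C"
  proof (cases "?C = {}")
    case False
    then obtain y where y: "y \<in> ?C"
      by blast
    have "z = y" if z: "z \<in> ?C" for z
    proof (rule ccontr)
      assume "z \<noteq> y"
      then have "h' = h \<or> a h' = - a h"
        using edges_share_two_points[of h h' z y] y z h h' facing_subset by blast
      then show False
        using h h' \<open>h \<noteq> h'\<close> by (auto simp: facing_def)
    qed
    then have "?C \<subseteq> {y}"
      by blast
    then show ?thesis
      by (rule finite_subset) simp
  qed simp
  then have "negligible (\<Union>c\<in>?C. (+) c ` span {u})"
    by (intro negligible_Union) (auto intro: negligible_line)
  ultimately show ?thesis
    by (rule negligible_subset[rotated])
qed

lemma measure_sweep_facing_edge:
  assumes h: "h \<in> facing u" and "r \<ge> 0"
  shows "measure lebesgue (sweep (edge h) u r) = r * (diameter (edge h) * - (a h \<bullet> u))"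
proof -
  have "h \<in> F"
    using h facing_subset by blast
  then obtain v w where vw: "edge h = closed_segment v w"
    by (rule edge_eq_closed_segment)
  then have "v \<in> edge h" "w \<in> edge h"
    by auto
  then have "a h \<bullet> (w - v) = 0"
    by (simp add: edge_def inner_diff_right)
  then have "\<bar>cross2 (w - v) u\<bar> = norm (w - v) * \<bar>a h \<bullet> u\<bar>"
    by (rule abs_cross2_orthogonal_unit[OF norm_normal[OF \<open>h \<in> F\<close>]])
  then show ?thesis
    using h \<open>r \<ge> 0\<close>
    by (simp add: vw measure_sweep_closed_segment diameter_closed_segment dist_norm
        norm_minus_commute facing_def)
qed

lemma measure_sweep_polygon:
  assumes "r \<ge> 0"
  shows "measure lebesgue (sweep T u r)
    = measure lebesgue T + r * (\<Sum>h\<in>F. diameter (edge h) * max 0 (- (a h \<bullet> u)))"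
proof -
  let ?U = "\<Union>h\<in>facing u. sweep (edge h) u r"
  have fin: "finite (facing u)"
    using finite_F facing_subset by (rule finite_subset[rotated])
  have meas_edge: "sweep (edge h) u r \<in> lmeasurable" for h
    by (intro lmeasurable_compact compact_sweep compact_edge)
  have meas_U: "?U \<in> lmeasurable"
    using fin meas_edge by (intro fmeasurable.finite_UN) auto
  have "negligible (T \<inter> ?U)"
    unfolding Int_UN_distrib using fin
    by (intro negligible_Union) (auto intro: negligible_polygon_Int_sweep_edge)
  then have "measure lebesgue (sweep T u r) = measure lebesgue T + measure lebesgue ?U"
    using compact_polygon meas_U
    by (simp add: sweep_polygon_eq[OF assms] measure_Un3 lmeasurable_compact negligible_imp_measure0)
  also have "measure lebesgue ?U = (\<Sum>h\<in>facing u. measure lebesgue (sweep (edge h) u r))"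
    using fin meas_edge
    by (intro measure_negligible_finite_Union_image) (auto simp: pairwise_def intro: negligible_sweep_edges_Int)
  also have "\<dots> = (\<Sum>h\<in>facing u. r * (diameter (edge h) * max 0 (- (a h \<bullet> u))))"
    using assms by (intro sum.cong) (auto simp: measure_sweep_facing_edge facing_def)
  also have "\<dots> = (\<Sum>h\<in>F. r * (diameter (edge h) * max 0 (- (a h \<bullet> u))))"
    using finite_F facing_subset by (intro sum.mono_neutral_left) (auto simp: facing_def)
  finally show ?thesis
    by (simp add: sum_distrib_left)
qed

lemma measure_sweep_direction_eq:
  assumes "r \<ge> 0"
  shows "measure lebesgue (sweep T (direction \<theta>) r)
    = measure lebesgue T + r * (\<Sum>h\<in>F. diameter (edge h) * max 0 (- (a h \<bullet> (cos \<theta>, sin \<theta>))))"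
  using measure_sweep_polygon[OF assms] by (simp add: direction_def)

lemma has_integral_measure_sweep_directions:
  assumes "r \<ge> 0"
  shows "((\<lambda>\<theta>. measure lebesgue (sweep T (direction \<theta>) r))
    has_integral (2*pi * measure lebesgue T + 2*r * perimeter T)) {0..2*pi}"
proof -
  have "((\<lambda>\<theta>. \<Sum>h\<in>F. diameter (edge h) * max 0 (- (a h \<bullet> (cos \<theta>, sin \<theta>))))
      has_integral (\<Sum>h\<in>F. diameter (edge h) * 2)) {0..2*pi}"
    using finite_F
    by (intro has_integral_sum has_integral_mult_right has_integral_pos_part_inner_direction norm_normal)
  then have "((\<lambda>\<theta>. measure lebesgue T + r * (\<Sum>h\<in>F. diameter (edge h) * max 0 (- (a h \<bullet> (cos \<theta>, sin \<theta>)))))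
      has_integral (2*pi * measure lebesgue T + r * (\<Sum>h\<in>F. diameter (edge h) * 2))) {0..2*pi}"
    using has_integral_const_real[of "measure lebesgue T" 0 "2*pi"]
    by (intro has_integral_add has_integral_mult_right) auto
  moreover have "(\<Sum>h\<in>F. diameter (edge h) * 2) = perimeter T * 2"
    by (simp add: perimeter_eq_sum_edges sum_distrib_right)
  ultimately show ?thesis
    by (simp add: measure_sweep_direction_eq[OF assms] ac_simps)
qed

lemma measure_hitting_configurations:
  assumes "r \<ge> 0"
  shows "measure lebesgue {(p, \<theta>). p \<in> sweep T (direction \<theta>) r \<and> \<theta> \<in> {0..<2*pi}}
    = 2*pi * measure lebesgue T + 2*r * perimeter T"
proof (rule measure_eq_integral_slices)
  let ?c = "\<lambda>\<theta>. measure lebesgue (sweep T (direction \<theta>) r)"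
  show "{(p, \<theta>). p \<in> sweep T (direction \<theta>) r \<and> \<theta> \<in> {0..<2*pi}} \<in> sets borel"
    by (rule sets_borel_sweep_directions[OF compact_polygon])
  have "continuous_on UNIV ?c"
    unfolding measure_sweep_direction_eq[OF assms] by (intro continuous_intros)
  then show "(\<lambda>\<theta>. indicator {0..<2*pi} \<theta> * ?c \<theta>) \<in> borel_measurable borel"
    by (intro borel_measurable_times borel_measurable_indicator borel_measurable_continuous_onI) auto
  have slice: "(\<lambda>p. (p, \<theta>)) -` {(p, \<theta>). p \<in> sweep T (direction \<theta>) r \<and> \<theta> \<in> {0..<2*pi}}
      = (if \<theta> \<in> {0..<2*pi} then sweep T (direction \<theta>) r else {})" for \<theta>
    by auto
  show "(\<lambda>p. (p, \<theta>)) -` {(p, \<theta>). p \<in> sweep T (direction \<theta>) r \<and> \<theta> \<in> {0..<2*pi}} \<in> lmeasurable" for \<theta>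
    unfolding slice by (simp add: lmeasurable_compact compact_sweep compact_polygon)
  show "measure lebesgue ((\<lambda>p. (p, \<theta>)) -` {(p, \<theta>). p \<in> sweep T (direction \<theta>) r \<and> \<theta> \<in> {0..<2*pi}})
      = indicator {0..<2*pi} \<theta> * ?c \<theta>" for \<theta>
    unfolding slice by simp
  have "(?c has_integral (2*pi * measure lebesgue T + 2*r * perimeter T)) {0..<2*pi}"
    using has_integral_measure_sweep_directions[OF assms]
    by (subst has_integral_spike_set_eq) (auto intro: negligible_subset[of "{2*pi}"])
  then show "((\<lambda>\<theta>. indicator {0..<2*pi} \<theta> * ?c \<theta>) has_integral (2*pi * measure lebesgue T + 2*r * perimeter T)) UNIV"
    by (subst indicator_times_eq_if(1)) (simp only: has_integral_restrict_UNIV)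
qed

end

lemma halfspace_eq_unit_normal:
  fixes a :: "'a::real_inner"
  assumes "a \<noteq> 0"
  shows "{x. a \<bullet> x \<le> b} = {x. (a /\<^sub>R norm a) \<bullet> x \<le> b / norm a}"
  using assms by (auto simp: divide_le_cancel divide_inverse mult.commute)

lemma convex_polygon_halfplanes:
  assumes "convex_polygon T"
  obtains F a b where "polygon_halfplanes T F a b"
proof -
  have "polyhedron T" and aff: "affine hull T = UNIV"
    using assms aff_dim_eq_full[of T]
    by (auto simp: convex_polygon_def polytope_imp_polyhedron)
  then obtain F where F: "finite F" "T = affine hull T \<inter> \<Inter>F"
    and hs: "\<forall>h\<in>F. \<exists>a b. a \<noteq> 0 \<and> h = {x. a \<bullet> x \<le> b}"
    and min: "\<forall>F'. F' \<subset> F \<longrightarrow> T \<subset> affine hull T \<inter> \<Inter>F'"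
    unfolding polyhedron_Int_affine_minimal by blast
  have "\<forall>h\<in>F. \<exists>a. norm a = 1 \<and> (\<exists>b. h = {x. a \<bullet> x \<le> b})"
    using hs halfspace_eq_unit_normal by (metis norm_sgn sgn_div_norm)
  then obtain a where a: "\<forall>h\<in>F. norm (a h) = 1 \<and> (\<exists>b. h = {x. a h \<bullet> x \<le> b})"
    by (metis bchoice)
  then obtain b where ab: "\<forall>h\<in>F. h = {x. a h \<bullet> x \<le> b h}"
    by (metis bchoice)
  have faceq: "a h \<noteq> 0 \<and> h = {x. a h \<bullet> x \<le> b h}" if "h \<in> F" for h
    using a ab that by fastforce
  show thesis
  proof (rule that, unfold_locales)
    show "T = {x. \<forall>h\<in>F. a h \<bullet> x \<le> b h}"
      using F(2) ab aff by auto
    show "C facet_of T \<longleftrightarrow> (\<exists>h\<in>F. C = T \<inter> {x. a h \<bullet> x = b h})" for C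
      using facet_of_polyhedron_explicit[OF F faceq] min by blast
  qed (use assms F(1) a ab in auto)
qed

section \<open>The detection probability\<close>

lemma infdist_le_of_mem_sweep:
  assumes "p \<in> sweep T u r" and "norm u = 1"
  shows "infdist p T \<le> r"
proof -
  obtain t where t: "t \<in> {0..r}" "p + t *\<^sub>R u \<in> T"
    using assms(1) by (auto simp: mem_sweep)
  then have "infdist p T \<le> dist p (p + t *\<^sub>R u)"
    by (intro infdist_le)
  also have "\<dots> = t"
    using t(1) assms(2) by (simp add: dist_norm)
  finally show ?thesis
    using t(1) by simp
qed

lemma sensor_dist_le_iff:
  fixes T :: "(real \<times> real) set"
  assumes "closed T" and "0 \<le> r" and "r \<le> rmax"
  shows "(\<exists>d. sensor_dist T rmax p \<theta> = Some d \<and> d \<le> r) \<longleftrightarrow> p \<in> sweep T (direction \<theta>) r"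
proof -
  define D where "D = {t\<in>{0..rmax}. p + t *\<^sub>R direction \<theta> \<in> T}"
  have "(fst p + t * cos \<theta>, snd p + t * sin \<theta>) = p + t *\<^sub>R direction \<theta>" for t
    by (simp add: direction_def prod_eq_iff)
  then have sensor: "sensor_dist T rmax p \<theta> = (if D = {} then None else Some (Inf D))"
    by (simp add: sensor_dist_def D_def Let_def)
  have "Inf D \<in> D" if "D \<noteq> {}"
    using Inf_hitting_times_mem[OF assms(1)] that by (simp add: D_def)
  moreover have "Inf D \<le> t" if "t \<in> D" for t
    using that by (intro cInf_lower) (auto simp: D_def bdd_below_def)
  ultimately show ?thesis
    using assms(2,3) unfolding sensor mem_sweep by (force simp: D_def)
qed

theorem theorem1:
  fixes \<Omega> T :: "(real \<times> real) set" and rmax r :: real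
  assumes "\<Omega> \<in> sets lebesgue" and "emeasure lebesgue \<Omega> < \<infinity>"
    and "convex_polygon T" and "T \<subseteq> \<Omega>"
    and "rmax > 0"
    and "\<And>p. infdist p T \<le> rmax \<Longrightarrow> p \<in> \<Omega>"
    and "0 \<le> r" and "r \<le> rmax"
  shows "geom_prob \<Omega> {(p, \<theta>). \<exists>d. sensor_dist T rmax p \<theta> = Some d \<and> d \<le> r}
         = (r * perimeter T + pi * area T) / (pi * area \<Omega>)"
proof -
  obtain F a b where "polygon_halfplanes T F a b"
    using convex_polygon_halfplanes[OF assms(3)] .
  then interpret polygon_halfplanes T F a b .
  have "p \<in> \<Omega>" if "p \<in> sweep T (direction \<theta>) r" for p \<theta>
    using infdist_le_of_mem_sweep[OF that norm_direction] assms(8) by (intro assms(6)) linarith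
  then have hits: "{(p, \<theta>). \<exists>d. sensor_dist T rmax p \<theta> = Some d \<and> d \<le> r} \<inter> (\<Omega> \<times> {0..<2*pi})
      = {(p, \<theta>). p \<in> sweep T (direction \<theta>) r \<and> \<theta> \<in> {0..<2*pi}}"
    using sensor_dist_le_iff[OF compact_imp_closed[OF compact_polygon] assms(7,8)] by auto
  have "geom_prob \<Omega> {(p, \<theta>). \<exists>d. sensor_dist T rmax p \<theta> = Some d \<and> d \<le> r}
      = (2*pi * area T + 2*r * perimeter T) / (2*pi * area \<Omega>)"
    unfolding geom_prob_def hits measure_hitting_configurations[OF assms(7)] area_def ..
  also have "\<dots> = (r * perimeter T + pi * area T) / (pi * area \<Omega>)"
    by (simp add: field_split_simps)
  finally show ?thesis .
qed

end
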